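(* Every functional $\Lambda$-system algebra over a set $\mathcal{X}$ that has unique fixed points and whose function $\Gamma$ permits reordering is composition-order invariant.
   Context: Let $\Lambda,\mathcal{X}$ be sets. For finite disjoint $\mathcal{I},\mathcal{O}\subseteq\Lambda$ let $\mathfrak{S}_{\mathcal{I},\mathcal{O}}$ be a set of functions $s:\mathcal{X}^{\mathcal{I}}\to\mathcal{X}^{\mathcal{O}}$ ($\mathcal{X}^{\mathcal{I}}$ = functions $\mathcal{I}\to\mathcal{X}$) and $\mathfrak{S}$ their union. For $s\in\mathfrak{S}_{\mathcal{I},\mathcal{O}}$, $i\in\mathcal{I}$, $o\in\mathcal{O}$, $\mathbf{x}\in\mathcal{X}^{\mathcal{I}\setminus\{i\}}$ let $\mathrm{Fix}(s,i,o,\mathbf{x}):=\{x_i\in\mathcal{X}\mid s(\mathbf{x}\cup\{(i,x_i)\})(o)=x_i\}$. Let $\Gamma$ assign to each $s\in\mathfrak{S}_{\mathcal{I},\mathcal{O}}$ a set of unordered pairs $\{i,o\}$, $i\in\mathcal{I}$, $o\in\mathcal{O}$, with $\mathrm{Fix}(s,i,o,\mathbf{x})\neq\emptyset$ for all $\mathbf{x}$, and let $\phi^s_{i,o}:\mathcal{X}^{\mathcal{I}\setminus\{i\}}\to\mathcal{X}$ satisfy $\phi^s_{i,o}(\mathbf{x})\in\mathrm{Fix}(s,i,o,\mathbf{x})$. Define $\lambda(s)=\mathcal{I}\cup\mathcal{O}$; $s_1\parallel s_2$ (for $s_j\in\mathfrak{S}_{\mathcal{I}_j,\mathcal{O}_j}$,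 all four index sets pairwise disjoint) by $(s_1\parallel s_2)(\mathbf{x})(o_j)=s_j(\mathbf{x}|_{\mathcal{I}_j})(o_j)$; and $\gamma_{i,o}(s)(\mathbf{x})=s(\mathbf{x}\cup\{(i,\phi^s_{i,o}(\mathbf{x}))\})|_{\mathcal{O}\setminus\{o\}}$ for $\{i,o\}\in\Gamma(s)$. If $\mathfrak{S}$ is closed under $\parallel,\gamma$ and $\{i,o\}\in\Gamma(s_1\parallel s_2)\iff\{i,o\}\in\Gamma(s_j)$ for $i,o\in\lambda(s_j)$, then $(\mathfrak{S},\lambda,\parallel,\Gamma,\gamma)$ is a functional $\Lambda$-system algebra over $\mathcal{X}$. It has unique fixed points if $|\mathrm{Fix}(s,i,o,\mathbf{x})|=1$ for all $s$, $\{i,o\}\in\Gamma(s)$, $\mathbf{x}$. $\Gamma$ permits reordering if for all $s$, $\{i,o\}\in\Gamma(s)$, $\{i',o'\}\in\Gamma(\gamma_{i,o}(s))$ we have $\{i',o'\}\in\Gamma(s)$ and $\{i,o\}\in\Gamma(\gamma_{i',o'}(s))$. The algebra is composition-order invariant if (i) $\Gamma$ permits reordering and $\gamma_{i',o'}(\gamma_{i,o}(s))=\gamma_{i,o}(\gamma_{i',o'}(s))$ in the situation just described, (ii) $\parallel$ is associative and commutative, and (iii) $\gamma_{i,o}(s_1)\parallel s_2=\gamma_{i,o}(s_1\parallel s_2)$ whenever $\lambda(s_1)\cap\lambda(s_2)=\emptyset$ and $\{i,o\}\in\Gamma(s_1)$. *)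

theory Defs
  imports Main
begin

text \<open>An element of X^I is represented as a partial map with domain
  exactly I; the function is required to be extensional (returns the empty
  map outside X^I), so that HOL equality is equality of functions X^I \<rightarrow> X^O.\<close>

record ('l, 'x) sys =
  ins  :: "'l set"
  outs :: "'l set"
  fn   :: "('l \<rightharpoonup> 'x) \<Rightarrow> ('l \<rightharpoonup> 'x)"

definition valid_sys :: "('l, 'x) sys \<Rightarrow> bool" where
  "valid_sys s \<longleftrightarrow> finite (ins s) \<and> finite (outs s) \<and> ins s \<inter> outs s = {} \<and>
     (\<forall>x. dom x = ins s \<longrightarrow> dom (fn s x) = outs s) \<and>
     (\<forall>x. dom x \<noteq> ins s \<longrightarrow> fn s x = Map.empty)"

definition lab :: "('l, 'x) sys \<Rightarrow> 'l set" where
  "lab s = ins s \<union> outs s"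

definition Fix :: "('l, 'x) sys \<Rightarrow> 'l \<Rightarrow> 'l \<Rightarrow> ('l \<rightharpoonup> 'x) \<Rightarrow> 'x set" where
  "Fix s i ou x = {xi. fn s (x(i \<mapsto> xi)) ou = Some xi}"

definition par :: "('l, 'x) sys \<Rightarrow> ('l, 'x) sys \<Rightarrow> ('l, 'x) sys" where
  "par s1 s2 = \<lparr> ins = ins s1 \<union> ins s2, outs = outs s1 \<union> outs s2,
     fn = (\<lambda>x. if dom x = ins s1 \<union> ins s2
               then fn s1 (x |` ins s1) ++ fn s2 (x |` ins s2) else Map.empty) \<rparr>"

text \<open>phi s i ou x is the chosen fixed point \<open>\<phi>^s_{i,ou}(x)\<close>.\<close>
definition gam :: "(('l, 'x) sys \<Rightarrow> 'l \<Rightarrow> 'l \<Rightarrow> ('l \<rightharpoonup> 'x) \<Rightarrow> 'x)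
    \<Rightarrow> ('l, 'x) sys \<Rightarrow> 'l \<Rightarrow> 'l \<Rightarrow> ('l, 'x) sys" where
  "gam phi s i ou = \<lparr> ins = ins s - {i}, outs = outs s - {ou},
     fn = (\<lambda>x. if dom x = ins s - {i}
               then fn s (x(i \<mapsto> phi s i ou x)) |` (outs s - {ou}) else Map.empty) \<rparr>"

text \<open>The unordered pair {i,ou} with i an input and ou an output is represented
  as the ordered pair (i,ou).\<close>
definition functional_system_algebra ::
  "('l, 'x) sys set \<Rightarrow> (('l, 'x) sys \<Rightarrow> ('l \<times> 'l) set)
   \<Rightarrow> (('l, 'x) sys \<Rightarrow> 'l \<Rightarrow> 'l \<Rightarrow> ('l \<rightharpoonup> 'x) \<Rightarrow> 'x) \<Rightarrow> bool" where
  "functional_system_algebra S Gam phi \<longleftrightarrow>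
     (\<forall>s\<in>S. valid_sys s) \<and>
     (\<forall>s\<in>S. Gam s \<subseteq> ins s \<times> outs s) \<and>
     (\<forall>s\<in>S. \<forall>(i, ou)\<in>Gam s. \<forall>x. dom x = ins s - {i} \<longrightarrow> Fix s i ou x \<noteq> {}) \<and>
     (\<forall>s\<in>S. \<forall>(i, ou)\<in>Gam s. \<forall>x. dom x = ins s - {i} \<longrightarrow> phi s i ou x \<in> Fix s i ou x) \<and>
     (\<forall>s1\<in>S. \<forall>s2\<in>S. lab s1 \<inter> lab s2 = {} \<longrightarrow> par s1 s2 \<in> S) \<and>
     (\<forall>s\<in>S. \<forall>(i, ou)\<in>Gam s. gam phi s i ou \<in> S) \<and>
     (\<forall>s1\<in>S. \<forall>s2\<in>S. lab s1 \<inter> lab s2 = {} \<longrightarrow>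
        (\<forall>i ou. i \<in> lab s1 \<and> ou \<in> lab s1 \<longrightarrow> ((i, ou) \<in> Gam (par s1 s2) \<longleftrightarrow> (i, ou) \<in> Gam s1)) \<and>
        (\<forall>i ou. i \<in> lab s2 \<and> ou \<in> lab s2 \<longrightarrow> ((i, ou) \<in> Gam (par s1 s2) \<longleftrightarrow> (i, ou) \<in> Gam s2)))"

definition unique_fixed_points ::
  "('l, 'x) sys set \<Rightarrow> (('l, 'x) sys \<Rightarrow> ('l \<times> 'l) set) \<Rightarrow> bool" where
  "unique_fixed_points S Gam \<longleftrightarrow>
     (\<forall>s\<in>S. \<forall>(i, ou)\<in>Gam s. \<forall>x. dom x = ins s - {i} \<longrightarrow> card (Fix s i ou x) = 1)"

definition permits_reordering ::
  "('l, 'x) sys set \<Rightarrow> (('l, 'x) sys \<Rightarrow> ('l \<times> 'l) set)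
   \<Rightarrow> (('l, 'x) sys \<Rightarrow> 'l \<Rightarrow> 'l \<Rightarrow> ('l \<rightharpoonup> 'x) \<Rightarrow> 'x) \<Rightarrow> bool" where
  "permits_reordering S Gam phi \<longleftrightarrow>
     (\<forall>s\<in>S. \<forall>(i, ou)\<in>Gam s. \<forall>(i', ou')\<in>Gam (gam phi s i ou).
        (i', ou') \<in> Gam s \<and> (i, ou) \<in> Gam (gam phi s i' ou'))"

definition composition_order_invariant ::
  "('l, 'x) sys set \<Rightarrow> (('l, 'x) sys \<Rightarrow> ('l \<times> 'l) set)
   \<Rightarrow> (('l, 'x) sys \<Rightarrow> 'l \<Rightarrow> 'l \<Rightarrow> ('l \<rightharpoonup> 'x) \<Rightarrow> 'x) \<Rightarrow> bool" where
  "composition_order_invariant S Gam phi \<longleftrightarrow>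
     permits_reordering S Gam phi \<and>
     (\<forall>s\<in>S. \<forall>(i, ou)\<in>Gam s. \<forall>(i', ou')\<in>Gam (gam phi s i ou).
        gam phi (gam phi s i ou) i' ou' = gam phi (gam phi s i' ou') i ou) \<and>
     (\<forall>s1\<in>S. \<forall>s2\<in>S. \<forall>s3\<in>S.
        lab s1 \<inter> lab s2 = {} \<and> lab s1 \<inter> lab s3 = {} \<and> lab s2 \<inter> lab s3 = {} \<longrightarrow>
        par (par s1 s2) s3 = par s1 (par s2 s3)) \<and>
     (\<forall>s1\<in>S. \<forall>s2\<in>S. lab s1 \<inter> lab s2 = {} \<longrightarrow> par s1 s2 = par s2 s1) \<and>
     (\<forall>s1\<in>S. \<forall>s2\<in>S. \<forall>(i, ou)\<in>Gam s1. lab s1 \<inter> lab s2 = {} \<longrightarrow>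
        par (gam phi s1 i ou) s2 = gam phi (par s1 s2) i ou)"

end

theory Submission
  imports Defs
begin

text \<open>Uniqueness of fixed points makes every choice of \<open>phi\<close> forced.  Contracting
  \<open>(i, o)\<close> and then \<open>(i', o')\<close> evaluates \<open>s\<close> at a point solving both feedback equations
  \<open>x\<^sub>i = s(\<dots>)(o)\<close> and \<open>x\<^sub>i\<^sub>' = s(\<dots>)(o')\<close>; conversely any joint solution is, coordinate
  by coordinate, the unique fixed point chosen at each stage, so both orders evaluate \<open>s\<close>
  at the same point.  Likewise a fixed point of \<open>s\<^sub>1 \<parallel> s\<^sub>2\<close> for a pair of \<open>s\<^sub>1\<close> is one of
  \<open>s\<^sub>1\<close> alone, since \<open>s\<^sub>2\<close> neither reads \<open>x\<^sub>i\<close> nor writes \<open>o\<close>.  Associativity and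
  commutativity of \<open>\<parallel>\<close> hold outright, the latter because disjoint output sets make
  the two output maps commute under \<open>++\<close>.\<close>

lemma ins_par [simp]: "ins (par s1 s2) = ins s1 \<union> ins s2"
  and outs_par [simp]: "outs (par s1 s2) = outs s1 \<union> outs s2"
  and fn_par [simp]: "fn (par s1 s2) x =
    (if dom x = ins s1 \<union> ins s2 then fn s1 (x |` ins s1) ++ fn s2 (x |` ins s2) else Map.empty)"
  by (simp_all add: par_def)

lemma ins_gam [simp]: "ins (gam phi s i ou) = ins s - {i}"
  and outs_gam [simp]: "outs (gam phi s i ou) = outs s - {ou}"
  and fn_gam [simp]: "fn (gam phi s i ou) x =
    (if dom x = ins s - {i} then fn s (x(i \<mapsto> phi s i ou x)) |` (outs s - {ou}) else Map.empty)"
  by (simp_all add: gam_def)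

lemma sys_eqI:
  fixes s t :: "('l, 'x) sys"
  assumes "ins s = ins t" "outs s = outs t" "\<And>x. fn s x = fn t x"
  shows "s = t"
  using assms by (cases s, cases t) auto

lemma valid_sys_dom_fn: "valid_sys s \<Longrightarrow> dom x = ins s \<Longrightarrow> dom (fn s x) = outs s"
  by (simp add: valid_sys_def)

lemma par_assoc: "par (par s1 s2) s3 = par s1 (par s2 s3)"
proof (rule sys_eqI)
  fix x
  show "fn (par (par s1 s2) s3) x = fn (par s1 (par s2 s3)) x"
  proof (cases "dom x = ins s1 \<union> ins s2 \<union> ins s3")
    case True
    then have "dom (x |` (ins s1 \<union> ins s2)) = ins s1 \<union> ins s2"
      and "dom (x |` (ins s2 \<union> ins s3)) = ins s2 \<union> ins s3" by auto
    with True show ?thesis by (simp add: Un_assoc Int_absorb1 Int_commute)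
  qed (auto simp: Un_assoc)
qed auto

lemma par_commute:
  assumes "valid_sys s1" "valid_sys s2" "lab s1 \<inter> lab s2 = {}"
  shows "par s1 s2 = par s2 s1"
proof (rule sys_eqI)
  fix x
  show "fn (par s1 s2) x = fn (par s2 s1) x"
  proof (cases "dom x = ins s1 \<union> ins s2")
    case True
    then have "dom (fn s1 (x |` ins s1)) = outs s1" "dom (fn s2 (x |` ins s2)) = outs s2"
      using assms(1,2) by (simp_all add: valid_sys_dom_fn)
    with assms(3) have "fn s1 (x |` ins s1) ++ fn s2 (x |` ins s2) = fn s2 (x |` ins s2) ++ fn s1 (x |` ins s1)"
      unfolding lab_def by (intro map_add_comm) auto
    with True show ?thesis by (auto simp: Un_commute)
  qed (auto simp: Un_commute)
qed (auto simp: Un_commute)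

definition unique_fix_selector :: "('l, 'x) sys \<Rightarrow> 'l \<Rightarrow> 'l \<Rightarrow> (('l \<rightharpoonup> 'x) \<Rightarrow> 'x) \<Rightarrow> bool" where
  "unique_fix_selector s i ou f \<longleftrightarrow> (\<forall>y. dom y = ins s - {i} \<longrightarrow> Fix s i ou y = {f y})"

lemma unique_fix_selector_iff:
  assumes "unique_fix_selector s i ou f" "dom y = ins s - {i}"
  shows "fn s (y(i \<mapsto> c)) ou = Some c \<longleftrightarrow> c = f y"
  using assms unfolding unique_fix_selector_def Fix_def by blast

lemma unique_fix_selector_unique:
  "unique_fix_selector s i ou f \<Longrightarrow> unique_fix_selector s i ou g \<Longrightarrow> dom y = ins s - {i} \<Longrightarrow> f y = g y"
  unfolding unique_fix_selector_def by blast

lemma Fix_par: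
  assumes "valid_sys s2" "lab s1 \<inter> lab s2 = {}" "i \<in> ins s1" "ou \<in> outs s1"
    and "dom x = ins s1 \<union> ins s2 - {i}"
  shows "Fix (par s1 s2) i ou x = Fix s1 i ou (x |` (ins s1 - {i}))"
proof -
  have not_in_s2: "i \<notin> ins s2" "ou \<notin> outs s2"
    using assms(2-4) unfolding lab_def by auto
  have "fn (par s1 s2) (x(i \<mapsto> c)) ou = fn s1 ((x |` (ins s1 - {i}))(i \<mapsto> c)) ou" for c
  proof -
    have "x(i \<mapsto> c) |` ins s1 = (x |` (ins s1 - {i}))(i \<mapsto> c)"
      using assms(3) by (auto simp: restrict_map_def fun_eq_iff)
    moreover have "dom (fn s2 (x(i \<mapsto> c) |` ins s2)) = outs s2"
      using assms(1,5) not_in_s2 by (intro valid_sys_dom_fn) auto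
    ultimately show ?thesis
      using assms(3,5) not_in_s2 by (auto simp: map_add_def split: option.split)
  qed
  then show ?thesis unfolding Fix_def by simp
qed

lemma unique_fix_selector_par:
  fixes s1 :: "('l, 'x) sys"
  assumes "unique_fix_selector s1 i ou f" "valid_sys s2" "lab s1 \<inter> lab s2 = {}"
    and "i \<in> ins s1" "ou \<in> outs s1"
  shows "unique_fix_selector (par s1 s2) i ou (\<lambda>x. f (x |` (ins s1 - {i})))"
  unfolding unique_fix_selector_def
proof (intro allI impI)
  fix x :: "'l \<rightharpoonup> 'x"
  assume dom_x: "dom x = ins (par s1 s2) - {i}"
  then have "dom (x |` (ins s1 - {i})) = ins s1 - {i}" by auto
  with assms dom_x show "Fix (par s1 s2) i ou x = {f (x |` (ins s1 - {i}))}"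
    by (simp add: Fix_par unique_fix_selector_def)
qed

lemma fn_gam_dom:
  "dom x = ins s - {i} \<Longrightarrow> fn (gam phi s i ou) x = fn s (x(i \<mapsto> phi s i ou x)) |` (outs s - {ou})"
  by simp

lemma fn_gam_upd:
  assumes "unique_fix_selector s i ou (phi s i ou)" "i' \<in> ins s" "i \<noteq> i'"
    and "dom x = ins s - {i} - {i'}" "fn s (x(i \<mapsto> c, i' \<mapsto> c')) ou = Some c"
  shows "fn (gam phi s i ou) (x(i' \<mapsto> c')) = fn s (x(i \<mapsto> c, i' \<mapsto> c')) |` (outs s - {ou})"
proof -
  have dom_y: "dom (x(i' \<mapsto> c')) = ins s - {i}"
    using assms(2-4) by auto
  have upd: "x(i' \<mapsto> c', i \<mapsto> c) = x(i \<mapsto> c, i' \<mapsto> c')"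
    using \<open>i \<noteq> i'\<close> by (simp add: fun_upd_twist)
  have "phi s i ou (x(i' \<mapsto> c')) = c"
    using unique_fix_selector_iff[OF assms(1) dom_y, of c] assms(5) upd by simp
  then show ?thesis
    using fn_gam_dom[OF dom_y] upd by simp
qed

lemma gam_gam_joint_fix:
  fixes s :: "('l, 'x) sys" and phi i ou i' ou'
  assumes sel: "unique_fix_selector s i ou (phi s i ou)"
    and sel_g: "unique_fix_selector (gam phi s i ou) i' ou' (phi (gam phi s i ou) i' ou')"
    and i'_in: "i' \<in> ins s" and "i \<noteq> i'" and dom_x: "dom x = ins s - {i} - {i'}"
  obtains c c' where "fn s (x(i \<mapsto> c, i' \<mapsto> c')) ou = Some c"
    and "fn s (x(i \<mapsto> c, i' \<mapsto> c')) ou' = Some c'"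
proof
  define c' where "c' = phi (gam phi s i ou) i' ou' x"
  define c where "c = phi s i ou (x(i' \<mapsto> c'))"
  have dom_y: "dom (x(i' \<mapsto> c')) = ins s - {i}"
    using i'_in \<open>i \<noteq> i'\<close> dom_x by auto
  have upd: "x(i' \<mapsto> c', i \<mapsto> c) = x(i \<mapsto> c, i' \<mapsto> c')"
    using \<open>i \<noteq> i'\<close> by (simp add: fun_upd_twist)
  show fix_i: "fn s (x(i \<mapsto> c, i' \<mapsto> c')) ou = Some c"
    using unique_fix_selector_iff[OF sel dom_y, of c] upd by (simp add: c_def)
  have "fn (gam phi s i ou) (x(i' \<mapsto> c')) ou' = Some c'"
    using unique_fix_selector_iff[OF sel_g, of x c'] dom_x by (simp add: c'_def)
  then show "fn s (x(i \<mapsto> c, i' \<mapsto> c')) ou' = Some c'"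
    using fn_gam_upd[where phi=phi, OF sel i'_in \<open>i \<noteq> i'\<close> dom_x fix_i]
    by (simp add: restrict_map_def split: if_splits)
qed

text \<open>Any joint fixed point of both pairs determines the twice-contracted system,
  since the successive choices of \<open>phi\<close> are forced to pick its coordinates.\<close>

lemma fn_gam_gam_joint_fix:
  fixes s :: "('l, 'x) sys" and phi i ou i' ou'
  assumes sel: "unique_fix_selector s i ou (phi s i ou)"
    and sel_g: "unique_fix_selector (gam phi s i ou) i' ou' (phi (gam phi s i ou) i' ou')"
    and i'_in: "i' \<in> ins s" and "i \<noteq> i'" and ou'_in: "ou' \<in> outs s" and "ou \<noteq> ou'"
    and dom_x: "dom x = ins s - {i} - {i'}"
    and fix_i: "fn s (x(i \<mapsto> c, i' \<mapsto> c')) ou = Some c"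
    and fix_i': "fn s (x(i \<mapsto> c, i' \<mapsto> c')) ou' = Some c'"
  shows "fn (gam phi (gam phi s i ou) i' ou') x = fn s (x(i \<mapsto> c, i' \<mapsto> c')) |` (outs s - {ou, ou'})"
proof -
  have dom_x': "dom x = ins (gam phi s i ou) - {i'}"
    using dom_x by simp
  have fn_g: "fn (gam phi s i ou) (x(i' \<mapsto> c')) = fn s (x(i \<mapsto> c, i' \<mapsto> c')) |` (outs s - {ou})"
    using fn_gam_upd[where phi=phi, OF sel i'_in \<open>i \<noteq> i'\<close> dom_x fix_i] .
  moreover have "(fn s (x(i \<mapsto> c, i' \<mapsto> c')) |` (outs s - {ou})) ou' = Some c'"
    using fix_i' ou'_in \<open>ou \<noteq> ou'\<close> by (simp add: restrict_in)
  ultimately have "phi (gam phi s i ou) i' ou' x = c'"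
    using unique_fix_selector_iff[OF sel_g dom_x', of c'] by argo
  then have "fn (gam phi (gam phi s i ou) i' ou') x
      = fn (gam phi s i ou) (x(i' \<mapsto> c')) |` (outs (gam phi s i ou) - {ou'})"
    by (simp only: fn_gam_dom[OF dom_x'])
  also have "\<dots> = fn s (x(i \<mapsto> c, i' \<mapsto> c')) |` ((outs s - {ou}) \<inter> (outs s - {ou} - {ou'}))"
    by (simp only: fn_g outs_gam restrict_restrict)
  also have "(outs s - {ou}) \<inter> (outs s - {ou} - {ou'}) = outs s - {ou, ou'}"
    by blast
  finally show ?thesis .
qed

lemma gam_commute:
  fixes s :: "('l, 'x) sys" and phi i ou i' ou'
  assumes "unique_fix_selector s i ou (phi s i ou)" "unique_fix_selector s i' ou' (phi s i' ou')"
    and "unique_fix_selector (gam phi s i ou) i' ou' (phi (gam phi s i ou) i' ou')"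
    and "unique_fix_selector (gam phi s i' ou') i ou (phi (gam phi s i' ou') i ou)"
    and "i \<in> ins s" "i' \<in> ins s" "i \<noteq> i'" "ou \<in> outs s" "ou' \<in> outs s" "ou \<noteq> ou'"
  shows "gam phi (gam phi s i ou) i' ou' = gam phi (gam phi s i' ou') i ou"
proof (rule sys_eqI)
  show "ins (gam phi (gam phi s i ou) i' ou') = ins (gam phi (gam phi s i' ou') i ou)"
    and "outs (gam phi (gam phi s i ou) i' ou') = outs (gam phi (gam phi s i' ou') i ou)"
    by (simp_all only: ins_gam outs_gam Diff_insert2[symmetric] insert_commute)
  fix x
  show "fn (gam phi (gam phi s i ou) i' ou') x = fn (gam phi (gam phi s i' ou') i ou) x"
  proof (cases "dom x = ins s - {i} - {i'}")
    case True
    then have dom_x': "dom x = ins s - {i'} - {i}" by auto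
    obtain c c' where fix_i: "fn s (x(i \<mapsto> c, i' \<mapsto> c')) ou = Some c"
      and fix_i': "fn s (x(i \<mapsto> c, i' \<mapsto> c')) ou' = Some c'"
      using gam_gam_joint_fix[OF assms(1,3,6,7) True] by blast
    have upd: "x(i' \<mapsto> c', i \<mapsto> c) = x(i \<mapsto> c, i' \<mapsto> c')"
      using \<open>i \<noteq> i'\<close> by (simp add: fun_upd_twist)
    have "fn (gam phi (gam phi s i ou) i' ou') x = fn s (x(i \<mapsto> c, i' \<mapsto> c')) |` (outs s - {ou, ou'})"
      using fn_gam_gam_joint_fix[OF assms(1,3,6,7,9,10) True fix_i fix_i'] .
    moreover have "fn (gam phi (gam phi s i' ou') i ou) x = fn s (x(i' \<mapsto> c', i \<mapsto> c)) |` (outs s - {ou', ou})"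
    proof (rule fn_gam_gam_joint_fix[OF assms(2,4,5) _ assms(8) _ dom_x'])
      show "i' \<noteq> i" "ou' \<noteq> ou" using assms(7,10) by auto
      show "fn s (x(i' \<mapsto> c', i \<mapsto> c)) ou' = Some c'" "fn s (x(i' \<mapsto> c', i \<mapsto> c)) ou = Some c"
        using fix_i fix_i' unfolding upd by auto
    qed
    ultimately show ?thesis by (simp only: upd insert_commute)
  next
    case False
    moreover have "ins s - {i'} - {i} = ins s - {i} - {i'}" by blast
    ultimately have "dom x \<noteq> ins s - {i'} - {i}" by argo
    with False show ?thesis
      by (simp only: fn_gam[of phi "gam phi s _ _"] ins_gam if_False)
  qed
qed

lemma par_gam:
  assumes sel: "unique_fix_selector s1 i ou (phi s1 i ou)"
    and sel_par: "unique_fix_selector (par s1 s2) i ou (phi (par s1 s2) i ou)"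
    and valid: "valid_sys s1" "valid_sys s2" and disj: "lab s1 \<inter> lab s2 = {}"
    and i_in: "i \<in> ins s1" and ou_in: "ou \<in> outs s1"
  shows "par (gam phi s1 i ou) s2 = gam phi (par s1 s2) i ou"
proof (rule sys_eqI)
  have not_in_s2: "i \<notin> ins s2" "ou \<notin> outs s2"
    using disj i_in ou_in unfolding lab_def by auto
  then have ins_eq: "ins s1 - {i} \<union> ins s2 = ins s1 \<union> ins s2 - {i}" by auto
  show "ins (par (gam phi s1 i ou) s2) = ins (gam phi (par s1 s2) i ou)"
    and "outs (par (gam phi s1 i ou) s2) = outs (gam phi (par s1 s2) i ou)"
    using ins_eq not_in_s2 by auto
  fix x
  show "fn (par (gam phi s1 i ou) s2) x = fn (gam phi (par s1 s2) i ou) x"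
  proof (cases "dom x = ins s1 \<union> ins s2 - {i}")
    case True
    define y where "y = x |` (ins s1 - {i})"
    define q where "q = phi s1 i ou y"
    have dom_y: "dom y = ins s1 - {i}"
      using True unfolding y_def by auto
    have "phi (par s1 s2) i ou x = q"
      using unique_fix_selector_unique[OF sel_par unique_fix_selector_par[OF sel valid(2) disj i_in ou_in]] True
      by (simp add: q_def y_def)
    then have R: "fn (gam phi (par s1 s2) i ou) x
        = (fn s1 (y(i \<mapsto> q)) ++ fn s2 (x |` ins s2)) |` (outs s1 \<union> outs s2 - {ou})"
    proof -
      have "x(i \<mapsto> q) |` ins s1 = y(i \<mapsto> q)" "x(i \<mapsto> q) |` ins s2 = x |` ins s2"
        using i_in not_in_s2 by (auto simp: y_def restrict_map_def fun_eq_iff)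
      moreover have "dom (x(i \<mapsto> q)) = ins s1 \<union> ins s2"
        using True i_in by auto
      ultimately show ?thesis
        using True \<open>phi (par s1 s2) i ou x = q\<close> by simp
    qed
    have L: "fn (par (gam phi s1 i ou) s2) x = fn s1 (y(i \<mapsto> q)) |` (outs s1 - {ou}) ++ fn s2 (x |` ins s2)"
      using True ins_eq dom_y by (simp add: q_def y_def)
    have "dom (fn s1 (y(i \<mapsto> q))) = outs s1"
      using valid(1) dom_y i_in by (intro valid_sys_dom_fn) auto
    moreover have "dom (fn s2 (x |` ins s2)) = outs s2"
      using valid(2) True not_in_s2 by (intro valid_sys_dom_fn) auto
    ultimately show ?thesis
      unfolding L R using not_in_s2
      by (auto simp: fun_eq_iff map_add_def restrict_map_def split: option.splits)
  qed (use ins_eq in simp)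
qed

lemma fsa_valid: "functional_system_algebra S Gam phi \<Longrightarrow> s \<in> S \<Longrightarrow> valid_sys s"
  by (simp add: functional_system_algebra_def)

lemma fsa_Gam_ins_outs:
  "functional_system_algebra S Gam phi \<Longrightarrow> s \<in> S \<Longrightarrow> (i, ou) \<in> Gam s \<Longrightarrow> i \<in> ins s \<and> ou \<in> outs s"
  unfolding functional_system_algebra_def by (elim conjE) blast

lemma fsa_par_closed:
  "functional_system_algebra S Gam phi \<Longrightarrow> s1 \<in> S \<Longrightarrow> s2 \<in> S \<Longrightarrow> lab s1 \<inter> lab s2 = {} \<Longrightarrow> par s1 s2 \<in> S"
  by (simp add: functional_system_algebra_def)

lemma fsa_gam_closed:
  "functional_system_algebra S Gam phi \<Longrightarrow> s \<in> S \<Longrightarrow> (i, ou) \<in> Gam s \<Longrightarrow> gam phi s i ou \<in> S"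
  unfolding functional_system_algebra_def by (elim conjE) force

lemma fsa_Gam_par:
  assumes "functional_system_algebra S Gam phi" "s1 \<in> S" "s2 \<in> S" "lab s1 \<inter> lab s2 = {}"
    and "(i, ou) \<in> Gam s1"
  shows "(i, ou) \<in> Gam (par s1 s2)"
proof -
  have "i \<in> lab s1" "ou \<in> lab s1"
    using fsa_Gam_ins_outs[OF assms(1,2,5)] unfolding lab_def by auto
  with assms show ?thesis
    unfolding functional_system_algebra_def by (elim conjE) force
qed

lemma unique_fix_selector_phi:
  fixes s :: "('l, 'x) sys"
  assumes "functional_system_algebra S Gam phi" "unique_fixed_points S Gam"
    and "s \<in> S" "(i, ou) \<in> Gam s"
  shows "unique_fix_selector s i ou (phi s i ou)"
  unfolding unique_fix_selector_def
proof (intro allI impI)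
  fix y :: "'l \<rightharpoonup> 'x"
  assume "dom y = ins s - {i}"
  with assms have "phi s i ou y \<in> Fix s i ou y"
    unfolding functional_system_algebra_def by (elim conjE) force
  moreover have "card (Fix s i ou y) = 1"
    using assms \<open>dom y = ins s - {i}\<close> unfolding unique_fixed_points_def by force
  ultimately show "Fix s i ou y = {phi s i ou y}"
    by (metis card_1_singletonE singletonD)
qed

lemma fsa_gam_commute:
  assumes fsa: "functional_system_algebra S Gam phi" and ufp: "unique_fixed_points S Gam"
    and reord: "permits_reordering S Gam phi"
    and s: "s \<in> S" and Gam1: "(i, ou) \<in> Gam s" and Gam2: "(i', ou') \<in> Gam (gam phi s i ou)"
  shows "gam phi (gam phi s i ou) i' ou' = gam phi (gam phi s i' ou') i ou"
proof -
  obtain Gam1': "(i', ou') \<in> Gam s" and Gam2': "(i, ou) \<in> Gam (gam phi s i' ou')"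
    using bspec[OF bspec[OF reord[unfolded permits_reordering_def] s] Gam1] Gam2 by auto
  have "i \<in> ins s" "ou \<in> outs s"
    using fsa_Gam_ins_outs[OF fsa s Gam1] by auto
  moreover have "i' \<in> ins s - {i}" "ou' \<in> outs s - {ou}"
    using fsa_Gam_ins_outs[OF fsa fsa_gam_closed[OF fsa s Gam1] Gam2] by auto
  ultimately show ?thesis
    using unique_fix_selector_phi[OF fsa ufp s Gam1] unique_fix_selector_phi[OF fsa ufp s Gam1']
      unique_fix_selector_phi[OF fsa ufp fsa_gam_closed[OF fsa s Gam1] Gam2]
      unique_fix_selector_phi[OF fsa ufp fsa_gam_closed[OF fsa s Gam1'] Gam2']
    by (intro gam_commute) blast+
qed

lemma fsa_par_gam:
  assumes fsa: "functional_system_algebra S Gam phi" and ufp: "unique_fixed_points S Gam"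
    and s1: "s1 \<in> S" and s2: "s2 \<in> S" and disj: "lab s1 \<inter> lab s2 = {}"
    and Gam1: "(i, ou) \<in> Gam s1"
  shows "par (gam phi s1 i ou) s2 = gam phi (par s1 s2) i ou"
proof (rule par_gam)
  show "unique_fix_selector s1 i ou (phi s1 i ou)"
    using unique_fix_selector_phi[OF fsa ufp s1 Gam1] .
  show "unique_fix_selector (par s1 s2) i ou (phi (par s1 s2) i ou)"
    using unique_fix_selector_phi[OF fsa ufp fsa_par_closed[OF fsa s1 s2 disj] fsa_Gam_par[OF fsa s1 s2 disj Gam1]] .
  show "valid_sys s1" "valid_sys s2"
    using fsa_valid[OF fsa] s1 s2 by auto
  show "i \<in> ins s1" "ou \<in> outs s1"
    using fsa_Gam_ins_outs[OF fsa s1 Gam1] by auto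
qed (fact disj)

theorem theorem4p7:
  fixes S :: "('l, 'x) sys set"
    and Gam :: "('l, 'x) sys \<Rightarrow> ('l \<times> 'l) set"
    and phi :: "('l, 'x) sys \<Rightarrow> 'l \<Rightarrow> 'l \<Rightarrow> ('l \<rightharpoonup> 'x) \<Rightarrow> 'x"
  assumes "functional_system_algebra S Gam phi"
    and "unique_fixed_points S Gam"
    and "permits_reordering S Gam phi"
  shows "composition_order_invariant S Gam phi"
  unfolding composition_order_invariant_def
proof (intro conjI)
  show "\<forall>s\<in>S. \<forall>(i, ou)\<in>Gam s. \<forall>(i', ou')\<in>Gam (gam phi s i ou).
      gam phi (gam phi s i ou) i' ou' = gam phi (gam phi s i' ou') i ou"
    using fsa_gam_commute[OF assms] by blast
  show "\<forall>s1\<in>S. \<forall>s2\<in>S. \<forall>s3\<in>S. lab s1 \<inter> lab s2 = {} \<and> lab s1 \<inter> lab s3 = {} \<and> lab s2 \<inter> lab s3 = {} \<longrightarrow>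
      par (par s1 s2) s3 = par s1 (par s2 s3)"
    by (simp add: par_assoc)
  show "\<forall>s1\<in>S. \<forall>s2\<in>S. lab s1 \<inter> lab s2 = {} \<longrightarrow> par s1 s2 = par s2 s1"
    using par_commute fsa_valid[OF assms(1)] by blast
  show "\<forall>s1\<in>S. \<forall>s2\<in>S. \<forall>(i, ou)\<in>Gam s1. lab s1 \<inter> lab s2 = {} \<longrightarrow>
      par (gam phi s1 i ou) s2 = gam phi (par s1 s2) i ou"
    using fsa_par_gam[OF assms(1,2)] by blast
qed (fact assms(3))

end
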